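(* Let $A$ be a finite-dimensional alternative algebra over a field of characteristic different from $2$ such that every linear endomorphism of $A$ is a quasiderivation, i.e. $QDer(A)=End(A)$. Then either $A$ is a field or $A$ has zero multiplication.
   Context: An algebra is alternative if $(x,x,y)=(x,y,y)=0$ identically, where $(x,y,z)=(xy)z-x(yz)$. A linear map $f:A\to A$ is a quasiderivation if there exists a linear map $Q:A\to A$ with $Q(xy)=f(x)y+xf(y)$ for all $x,y\in A$; $QDer(A)$ is the set of quasiderivations and $End(A)$ the set of all linear endomorphisms of $A$. *)

theory Defs
  imports Complex_Main
begin

definition bilinear_prod :: "('f::field \<Rightarrow> 'v::ab_group_add \<Rightarrow> 'v) \<Rightarrow> ('v \<Rightarrow> 'v \<Rightarrow> 'v) \<Rightarrow> bool" where
  "bilinear_prod scale mult \<longleftrightarrow>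
     (\<forall>x. Vector_Spaces.linear scale scale (mult x)) \<and> (\<forall>y. Vector_Spaces.linear scale scale (\<lambda>x. mult x y))"

definition associator :: "('v \<Rightarrow> 'v \<Rightarrow> 'v::ab_group_add) \<Rightarrow> 'v \<Rightarrow> 'v \<Rightarrow> 'v \<Rightarrow> 'v" where
  "associator mult x y z = mult (mult x y) z - mult x (mult y z)"

definition alternative_alg :: "('v \<Rightarrow> 'v \<Rightarrow> 'v::ab_group_add) \<Rightarrow> bool" where
  "alternative_alg mult \<longleftrightarrow>
     (\<forall>x y. associator mult x x y = 0 \<and> associator mult x y y = 0)"

definition quasiderivation :: "('f::field \<Rightarrow> 'v::ab_group_add \<Rightarrow> 'v) \<Rightarrow> ('v \<Rightarrow> 'v \<Rightarrow> 'v) \<Rightarrow> ('v \<Rightarrow> 'v) \<Rightarrow> bool" where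
  "quasiderivation scale mult f \<longleftrightarrow> Vector_Spaces.linear scale scale f \<and>
     (\<exists>Q. Vector_Spaces.linear scale scale Q \<and> (\<forall>x y. Q (mult x y) = mult (f x) y + mult x (f y)))"

definition is_field_alg :: "('v \<Rightarrow> 'v \<Rightarrow> 'v::ab_group_add) \<Rightarrow> bool" where
  "is_field_alg mult \<longleftrightarrow>
     (\<forall>x y. mult x y = mult y x) \<and>
     (\<forall>x y z. mult (mult x y) z = mult x (mult y z)) \<and>
     (\<exists>e. e \<noteq> 0 \<and> (\<forall>x. mult e x = x) \<and> (\<forall>x. x \<noteq> 0 \<longrightarrow> (\<exists>y. mult x y = e)))"

end

theory Submission
  imports Defs
begin

(* The only tool is the following observation: if f is a quasiderivation, then the value
   f(x)y + x f(y) depends on the product xy alone (it equals Q(xy)).  Since every linear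
   map is a quasiderivation, and linear maps can be prescribed freely on vectors lying
   outside a given span, this gives strong constraints on the multiplication:
     1. if all squares vanish, all products vanish;
     2. a nonzero square x\<^sup>2 is a multiple of x, so some e \<noteq> 0 satisfies e\<^sup>2 = e;
     3. such an idempotent is a two-sided identity, every linear g with g e = 0 is then a
        derivation, and this forces A = span {e};
     4. a one-dimensional algebra spanned by an idempotent is a field. *)

context vector_space
begin

lemma exists_linear_vanishing_on:
  assumes "w \<notin> span S"
  shows "\<exists>g. Vector_Spaces.linear scale scale g \<and> (\<forall>s\<in>S. g s = 0) \<and> g w = u"
proof -
  interpret endo: vector_space_pair scale scale ..
  obtain B where B: "B \<subseteq> S" "independent B" "S \<subseteq> span B"
    using maximal_independent_subset[of S] by blast
  have "span S = span B"
    using B span_eq by (meson span_superset subset_trans)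
  then have wB: "w \<notin> span B"
    using assms by simp
  then have "w \<notin> B"
    using span_superset by blast
  obtain g where g: "Vector_Spaces.linear scale scale g"
    and g_on: "\<forall>x\<in>insert w B. g x = (if x = w then u else 0)"
    using endo.linear_independent_extend[OF independent_insertI[OF wB B(2)],
        of "\<lambda>x. if x = w then u else 0"] by blast
  have g_B: "\<forall>x\<in>B. g x = 0"
    using g_on \<open>w \<notin> B\<close> by auto
  have "g s = 0" if "s \<in> S" for s
    using endo.linear_eq_0_on_span[OF g] g_B B(3) that by blast
  then show ?thesis
    using g g_on by auto
qed

text \<open>If b is not a multiple of a, a linear map can send a to 0 and b to u while
  mapping any further prescribed vector p into the line through u: either p is
  independent of a and b and may be sent to 0, or p = k b + c a and goes to k u.\<close>

lemma exists_linear_line_adapted: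
  assumes "b \<notin> span {a}"
  shows "\<exists>g. Vector_Spaces.linear scale scale g \<and> g a = 0 \<and> g b = u \<and> g p \<in> span {u}"
proof (cases "p \<in> span {b, a}")
  case True
  interpret endo: vector_space_pair scale scale ..
  obtain g where g: "Vector_Spaces.linear scale scale g" "g a = 0" "g b = u"
    using exists_linear_vanishing_on[OF assms] by auto
  obtain k where "p - k *s b \<in> span {a}"
    using True span_breakdown_eq by blast
  then obtain c where "p - k *s b = c *s a"
    by (auto simp: span_singleton)
  then have p: "p = k *s b + c *s a"
    by (simp add: algebra_simps)
  have "g p = k *s u"
    using g by (simp add: p endo.linear_add endo.linear_scale)
  then show ?thesis
    using g span_singleton by auto
next
  case False
  then have "b \<notin> span {p, a}"
    using in_span_insert assms by blast
  then obtain g where "Vector_Spaces.linear scale scale g" "g p = 0" "g a = 0" "g b = u"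
    using exists_linear_vanishing_on by (metis insert_iff)
  then show ?thesis
    using span_zero by metis
qed

lemma double_eq_scale_two: "x + x = (2::'a) *s x"
  by (metis one_add_one scale_left_distrib scale_one)

end

locale bilinear_algebra = vector_space scale + endo: vector_space_pair scale scale
  for scale :: "'f::field \<Rightarrow> 'v::ab_group_add \<Rightarrow> 'v" (infixr \<open>*s\<close> 75) +
  fixes mult :: "'v \<Rightarrow> 'v \<Rightarrow> 'v" (infixl \<open>\<odot>\<close> 70)
  assumes bilinear: "bilinear_prod scale mult"
begin

lemma mult_linear_right: "Vector_Spaces.linear scale scale (\<lambda>y. x \<odot> y)"
  using bilinear unfolding bilinear_prod_def by simp

lemma mult_linear_left: "Vector_Spaces.linear scale scale (\<lambda>x. x \<odot> y)"
  using bilinear unfolding bilinear_prod_def by simp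

lemma mult_scale_right: "x \<odot> (c *s y) = c *s (x \<odot> y)"
  and mult_diff_right: "x \<odot> (y - z) = x \<odot> y - x \<odot> z"
  and mult_zero_right [simp]: "x \<odot> 0 = 0"
  by (rule endo.linear_scale endo.linear_diff endo.linear_0, rule mult_linear_right)+

lemma mult_scale_left: "(c *s x) \<odot> y = c *s (x \<odot> y)"
  and mult_diff_left: "(x - y) \<odot> z = x \<odot> z - y \<odot> z"
  and mult_zero_left [simp]: "0 \<odot> y = 0"
  by (rule endo.linear_scale endo.linear_diff endo.linear_0, rule mult_linear_left)+

lemma quasiderivation_product_invariant:
  assumes "quasiderivation scale mult f" and "x \<odot> y = u \<odot> v"
  shows "f x \<odot> y + x \<odot> f y = f u \<odot> v + u \<odot> f v"
  using assms unfolding quasiderivation_def by metis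

text \<open>A quasiderivation vanishing on a left identity is a derivation, since then
  Q(xy) = Q(e(xy)) = e f(xy) = f(xy).\<close>

lemma quasiderivation_is_derivation:
  assumes "quasiderivation scale mult f" and "\<forall>z. e \<odot> z = z" and "f e = 0"
  shows "f (x \<odot> y) = f x \<odot> y + x \<odot> f y"
  using quasiderivation_product_invariant[OF assms(1), of e "x \<odot> y" x y] assms(2,3) by simp

lemma field_if_spanned_by_idempotent:
  assumes idem: "e \<odot> e = e" and "e \<noteq> 0" and spans: "\<forall>x. x \<in> span {e}"
  shows "is_field_alg mult"
proof -
  have coord: "\<exists>c. x = c *s e" for x
    using spans span_singleton by auto
  have prod: "(c *s e) \<odot> (d *s e) = (c * d) *s e" for c d
    using idem by (simp add: mult_scale_left mult_scale_right mult.commute)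
  have comm: "x \<odot> y = y \<odot> x" for x y
    using coord[of x] coord[of y] prod by (auto simp: mult.commute)
  have assoc: "(x \<odot> y) \<odot> z = x \<odot> (y \<odot> z)" for x y z
    using coord[of x] coord[of y] coord[of z] prod by (auto simp: mult.assoc)
  have unit: "e \<odot> x = x" for x
    using coord[of x] prod[of 1] by auto
  have inverse: "\<exists>y. x \<odot> y = e" if "x \<noteq> 0" for x
  proof -
    obtain c where c: "x = c *s e"
      using coord by blast
    with that have "c \<noteq> 0"
      by auto
    then show ?thesis
      using c prod[of c "inverse c"] by auto
  qed
  show ?thesis
    unfolding is_field_alg_def using comm assoc unit inverse \<open>e \<noteq> 0\<close> by blast
qed

end

locale alternative_all_quasiderivations = bilinear_algebra scale mult
  for scale :: "'f::field \<Rightarrow> 'v::ab_group_add \<Rightarrow> 'v" (infixr \<open>*s\<close> 75)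
    and mult :: "'v \<Rightarrow> 'v \<Rightarrow> 'v" (infixl \<open>\<odot>\<close> 70) +
  assumes alternative: "alternative_alg mult"
    and every_linear_map_quasiderivation:
      "\<forall>f. Vector_Spaces.linear scale scale f \<longrightarrow> quasiderivation scale mult f"
    and two_nonzero: "(2::'f) \<noteq> 0"
begin

lemma left_alternative: "(x \<odot> x) \<odot> y = x \<odot> (x \<odot> y)"
  using alternative unfolding alternative_alg_def associator_def by (metis eq_iff_diff_eq_0)

lemma right_alternative: "(x \<odot> y) \<odot> y = x \<odot> (y \<odot> y)"
  using alternative unfolding alternative_alg_def associator_def by (metis eq_iff_diff_eq_0)

lemma linear_product_invariant:
  assumes "Vector_Spaces.linear scale scale f" and "x \<odot> y = u \<odot> v"
  shows "f x \<odot> y + x \<odot> f y = f u \<odot> v + u \<odot> f v"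
  using quasiderivation_product_invariant every_linear_map_quasiderivation assms by blast

lemma linear_zero_product:
  assumes "Vector_Spaces.linear scale scale f" and "x \<odot> y = 0"
  shows "f x \<odot> y + x \<odot> f y = 0"
  using linear_product_invariant[OF assms(1), of x y 0 0] assms(2) by simp

text \<open>By alternativity
  xz = 0 and zy = 0.  If z is not a multiple of x, a linear g with g x = 0, g z = y
  gives 0 = g(x)z + x g(z) = xy = z; if z = c x then c z = zy = 0, so again z = 0.\<close>

lemma zero_product_if_squares_zero:
  assumes squares: "\<forall>x. x \<odot> x = 0"
  shows "x \<odot> y = 0"
proof (rule ccontr)
  define z where "z = x \<odot> y"
  assume "x \<odot> y \<noteq> 0"
  then have "z \<noteq> 0"
    by (simp add: z_def)
  have xz: "x \<odot> z = 0"
    using left_alternative[of x y] squares by (simp add: z_def)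
  have zy: "z \<odot> y = 0"
    using right_alternative[of x y] squares by (simp add: z_def)
  show False
  proof (cases "z \<in> span {x}")
    case True
    then obtain c where c: "z = c *s x"
      by (auto simp: span_singleton)
    then have "c *s z = 0"
      using zy by (simp add: mult_scale_left z_def)
    then show False
      using c \<open>z \<noteq> 0\<close> by simp
  next
    case False
    then obtain g where g: "Vector_Spaces.linear scale scale g" "g x = 0" "g z = y"
      using exists_linear_vanishing_on[of z "{x}" y] by auto
    show False
      using linear_zero_product[OF g(1) xz] g \<open>z \<noteq> 0\<close> by (simp add: z_def)
  qed
qed

text \<open>Step 2. A nonzero square b = a a lies on the line through a.  Otherwise pick
  a linear g with g a = 0, g b = a and g(ab) = c a.  Comparing the factorisations
  b b = a(ab) gives 2 ab = a g(ab) = c b, so g(ab) = (c/2) a as well, whence c = 0 and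
  ab = 0; but then 0 = g(a)b + a g(b) = a a = b.\<close>

lemma square_in_line:
  assumes "a \<odot> a \<noteq> 0"
  shows "a \<odot> a \<in> span {a}"
proof (rule ccontr)
  define b where "b = a \<odot> a"
  assume "a \<odot> a \<notin> span {a}"
  then have b_indep: "b \<notin> span {a}"
    by (simp add: b_def)
  have "a \<noteq> 0"
    using assms by auto
  obtain g where g: "Vector_Spaces.linear scale scale g" "g a = 0" "g b = a"
    and "g (a \<odot> b) \<in> span {a}"
    using exists_linear_line_adapted[OF b_indep] by blast
  then obtain c where gab: "g (a \<odot> b) = c *s a"
    by (auto simp: span_singleton)
  have flexible: "b \<odot> a = a \<odot> b"
    using left_alternative[of a a] by (simp add: b_def)
  have "b \<odot> b = a \<odot> (a \<odot> b)"
    using left_alternative[of a b] by (simp add: b_def)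
  from linear_product_invariant[OF g(1) this]
  have "(2::'f) *s (a \<odot> b) = c *s b"
    using g flexible gab by (simp add: double_eq_scale_two mult_scale_right b_def)
  then have "a \<odot> b = (c / 2) *s b"
    using two_nonzero by (metis (no_types, lifting) divide_inverse_commute
        left_inverse mult.commute scale_one scale_scale)
  then have "g (a \<odot> b) = (c / 2) *s a"
    using g by (simp add: endo.linear_scale)
  then have "c *s a = (c / 2) *s a"
    using gab by simp
  then have "c = c / 2"
    using \<open>a \<noteq> 0\<close> by (simp add: scale_cancel_right)
  then have "c * 2 = c"
    using two_nonzero by (simp add: field_simps)
  then have "c = 0"
    by (metis add_cancel_right_right mult_2_right)
  then have "a \<odot> b = 0"
    using \<open>a \<odot> b = (c / 2) *s b\<close> by simp
  from linear_zero_product[OF g(1) this] show False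
    using g assms by (simp add: b_def)
qed

lemma idempotent_exists:
  assumes "a \<odot> a \<noteq> 0"
  obtains e where "e \<odot> e = e" and "e \<noteq> 0"
proof -
  obtain l where l: "a \<odot> a = l *s a"
    using square_in_line[OF assms] by (auto simp: span_singleton)
  with assms have "l \<noteq> 0"
    by auto
  show thesis
  proof
    show "(inverse l *s a) \<odot> (inverse l *s a) = inverse l *s a"
      using l \<open>l \<noteq> 0\<close> by (simp add: mult_scale_left mult_scale_right scale_scale)
    show "inverse l *s a \<noteq> 0"
      using l assms \<open>l \<noteq> 0\<close> by auto
  qed
qed

text \<open>A nonzero idempotent has no nonzero one-sided annihilator: if ez = 0
  (or ze = 0) and z is not a multiple of e, a linear g with g e = 0, g z = e yields
  e = ee = 0; and z = c e gives c e = 0.\<close>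

lemma idempotent_annihilator:
  assumes idem: "e \<odot> e = e" and "e \<noteq> 0" and annihilates: "e \<odot> z = 0 \<or> z \<odot> e = 0"
  shows "z = 0"
proof (cases "z \<in> span {e}")
  case True
  then obtain c where "z = c *s e"
    by (auto simp: span_singleton)
  then show ?thesis
    using annihilates idem by (auto simp: mult_scale_left mult_scale_right)
next
  case False
  then obtain g where g: "Vector_Spaces.linear scale scale g" "g e = 0" "g z = e"
    using exists_linear_vanishing_on[of z "{e}" e] by auto
  show ?thesis
    using annihilates linear_zero_product[OF g(1), of e z] linear_zero_product[OF g(1), of z e]
      g idem \<open>e \<noteq> 0\<close> by auto
qed

text \<open>Step 3b. A nonzero idempotent is a two-sided identity, because y - ey and
  y - ye are annihilated by e (by alternativity).\<close>

lemma idempotent_left_identity: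
  assumes "e \<odot> e = e" and "e \<noteq> 0"
  shows "e \<odot> y = y"
  using idempotent_annihilator[OF assms, of "y - e \<odot> y"] left_alternative[of e y] assms(1)
  by (simp add: mult_diff_right)

lemma idempotent_right_identity:
  assumes "e \<odot> e = e" and "e \<noteq> 0"
  shows "y \<odot> e = y"
  using idempotent_annihilator[OF assms, of "y - y \<odot> e"] right_alternative[of y e] assms(1)
  by (simp add: mult_diff_left)

text \<open>For y not a multiple of e take
  a linear g with g e = 0, g y = e and g(yy) a multiple of e.  Being a derivation, g
  gives g(yy) = e y + y e = 2 y, so y is a multiple of e after all.\<close>

lemma idempotent_spans:
  assumes idem: "e \<odot> e = e" and "e \<noteq> 0"
  shows "y \<in> span {e}"
proof (rule ccontr)
  assume "y \<notin> span {e}"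
  then obtain g where g: "Vector_Spaces.linear scale scale g" "g e = 0" "g y = e"
    and gyy: "g (y \<odot> y) \<in> span {e}"
    using exists_linear_line_adapted by blast
  have "g (y \<odot> y) = g y \<odot> y + y \<odot> g y"
    using quasiderivation_is_derivation every_linear_map_quasiderivation g(1,2)
      idempotent_left_identity[OF assms] by blast
  then have "(2::'f) *s y \<in> span {e}"
    using gyy g(3) idempotent_left_identity[OF assms] idempotent_right_identity[OF assms]
    by (simp add: double_eq_scale_two)
  then have "inverse 2 *s ((2::'f) *s y) \<in> span {e}"
    by (rule span_scale)
  then show False
    using \<open>y \<notin> span {e}\<close> two_nonzero by simp
qed

theorem field_or_zero_product: "is_field_alg mult \<or> (\<forall>x y. x \<odot> y = 0)"
proof (cases "\<forall>x. x \<odot> x = 0")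
  case True
  then show ?thesis
    using zero_product_if_squares_zero by blast
next
  case False
  then obtain e where "e \<odot> e = e" and "e \<noteq> 0"
    using idempotent_exists by blast
  then have "is_field_alg mult"
    using field_if_spanned_by_idempotent idempotent_spans by blast
  then show ?thesis ..
qed

end

theorem mainTheorem13:
  fixes scale :: "'f::field \<Rightarrow> 'v::ab_group_add \<Rightarrow> 'v"
    and mult :: "'v \<Rightarrow> 'v \<Rightarrow> 'v"
  assumes "vector_space scale"
    and "\<exists>B. finite B \<and> module.span scale B = UNIV"
    and "(2::'f) \<noteq> 0"
    and "bilinear_prod scale mult"
    and "alternative_alg mult"
    and "\<forall>f. Vector_Spaces.linear scale scale f \<longrightarrow> quasiderivation scale mult f"
  shows "is_field_alg mult \<or> (\<forall>x y. mult x y = 0)"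
proof -
  interpret alternative_all_quasiderivations scale mult
    using assms(1,3-6) by (simp add: alternative_all_quasiderivations_def
        alternative_all_quasiderivations_axioms_def bilinear_algebra_def
        bilinear_algebra_axioms_def vector_space_pair_def)
  show ?thesis
    by (rule field_or_zero_product)
qed

end
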